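(* Let $\gamma,\gamma'>0$, $f\in\mathcal H^D\mathcal I^{\mathcal E}_\gamma$ and $g\in\mathcal H^D\mathcal I^{\mathcal E}_{\gamma'}$ with $f*_\gamma g=0$. Then either $f*_\gamma h=0$ for every function $h$ for which $f*_\gamma h$ is defined, or $g*_{\gamma'}h=0$ for every function $h$ for which $g*_{\gamma'}h$ is defined. In particular, $f*_\gamma f=0$ or $g*_{\gamma'}g=0$.
   Context: Fix $q\in(0,1)$. Notation: $(a;q)_k=\prod_{j=0}^{k-1}(1-aq^j)$, $[k]_q!=(q;q)_k/(1-q)^k$. The $q$-derivative is $(\partial f)(x)=\frac{f(x)-f(qx)}{(1-q)x}$ (extended to $x=0$ by continuity for $f$ holomorphic near $0$). For $\gamma>0$, $L(\gamma)=\{\pm q^k\gamma:k\in\mathbb Z\}$ and $\int_\gamma f=(1-q)\sum_{k\in\mathbb Z}\sum_{\epsilon=\pm1}q^k\gamma f(\epsilon q^k\gamma)$ whenever absolutely convergent. $\mathcal I^\infty_\gamma$ is the set of functions $f$ on $L(\gamma)$ with $\int_\gamma|f(x)x^e|<\infty$ for all integers $e\ge0$. Moments: $\mu_{e,\gamma}(f)=q^{(e^2+e)/2}\int_\gamma f(x)x^e$. The $q$-moment series is $\mu_\gamma(f)(t)=\sum_{k\ge0}\mu_{k,\gamma}(f)t^k/[k]_q!$; $\mathcal I^{\mathcal E}_\gamma$ is the set of $f\in\mathcal I^\infty_\gamma$ with $\mu_\gamma(f)$ entire. $\mathcal H^D\mathcal I^{\mathcal E}_\gamma$ is the set of $f\in\mathcal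 I^{\mathcal E}_\gamma$ for which there is an open disk centered at $0$ containing $\{\pm q^k\gamma:k\ge0\}$ and a holomorphic function on it agreeing with $f$ on the lattice points in the disk. The $q$-convolution of $f\in\mathcal I^\infty_\gamma$ with $g$ is $(f*_\gamma g)(x)=\sum_{e\ge0}\frac{(-1)^e\mu_{e,\gamma}(f)}{[e]_q!}(\partial^eg)(x)$ at all $x$ where the $q$-derivatives are defined and the series converges absolutely. *)

theory Defs
  imports "HOL-Complex_Analysis.Complex_Analysis"
begin

definition qlat :: "real \<Rightarrow> real \<Rightarrow> complex set" where
  "qlat q \<gamma> = {complex_of_real (\<epsilon> * q powi k * \<gamma>) | \<epsilon> k. \<epsilon> \<in> {-1, 1::real}}"

definition qint_summand :: "real \<Rightarrow> real \<Rightarrow> (complex \<Rightarrow> complex) \<Rightarrow> int \<times> real \<Rightarrow> complex" where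
  "qint_summand q \<gamma> F = (\<lambda>(k, \<epsilon>). complex_of_real (q powi k * \<gamma>) * F (complex_of_real (\<epsilon> * q powi k * \<gamma>)))"

definition qintegrable :: "real \<Rightarrow> real \<Rightarrow> (complex \<Rightarrow> complex) \<Rightarrow> bool" where
  "qintegrable q \<gamma> F \<longleftrightarrow> (\<lambda>p. norm (qint_summand q \<gamma> F p)) summable_on (UNIV \<times> {-1, 1})"

definition qint :: "real \<Rightarrow> real \<Rightarrow> (complex \<Rightarrow> complex) \<Rightarrow> complex" where
  "qint q \<gamma> F = complex_of_real (1 - q) * infsum (qint_summand q \<gamma> F) (UNIV \<times> {-1, 1})"

definition qfact :: "real \<Rightarrow> nat \<Rightarrow> real" where
  "qfact q k = (\<Prod>j\<in>{1..k}. (1 - q ^ j) / (1 - q))"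

definition qmoment :: "real \<Rightarrow> real \<Rightarrow> (complex \<Rightarrow> complex) \<Rightarrow> nat \<Rightarrow> complex" where
  "qmoment q \<gamma> f e = complex_of_real (q ^ ((e ^ 2 + e) div 2)) * qint q \<gamma> (\<lambda>x. f x * x ^ e)"

definition I_inf :: "real \<Rightarrow> real \<Rightarrow> (complex \<Rightarrow> complex) \<Rightarrow> bool" where
  "I_inf q \<gamma> f \<longleftrightarrow> (\<forall>e::nat. qintegrable q \<gamma> (\<lambda>x. f x * x ^ e))"

definition I_E :: "real \<Rightarrow> real \<Rightarrow> (complex \<Rightarrow> complex) \<Rightarrow> bool" where
  "I_E q \<gamma> f \<longleftrightarrow> I_inf q \<gamma> f \<and>
     (\<forall>t::complex. summable (\<lambda>k. qmoment q \<gamma> f k * t ^ k / complex_of_real (qfact q k)))"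

definition HD_I_E :: "real \<Rightarrow> real \<Rightarrow> (complex \<Rightarrow> complex) \<Rightarrow> bool" where
  "HD_I_E q \<gamma> f \<longleftrightarrow> I_E q \<gamma> f \<and>
     (\<exists>r > \<gamma>. \<exists>F. F holomorphic_on ball 0 r \<and> (\<forall>x \<in> qlat q \<gamma> \<inter> ball 0 r. F x = f x))"

text \<open>q-derivative; at 0 the continuous extension (for h holomorphic near 0) is h'(0).\<close>
definition qderiv :: "real \<Rightarrow> (complex \<Rightarrow> complex) \<Rightarrow> complex \<Rightarrow> complex" where
  "qderiv q h x = (if x = 0 then deriv h 0
                   else (h x - h (complex_of_real q * x)) / (complex_of_real (1 - q) * x))"

definition qderivs :: "real \<Rightarrow> nat \<Rightarrow> (complex \<Rightarrow> complex) \<Rightarrow> complex \<Rightarrow> complex" where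
  "qderivs q e h = (qderiv q ^^ e) h"

definition qderivs_defined :: "real \<Rightarrow> complex set \<Rightarrow> (complex \<Rightarrow> complex) \<Rightarrow> nat \<Rightarrow> complex \<Rightarrow> bool" where
  "qderivs_defined q D h e x \<longleftrightarrow>
     (if x = 0 then (\<exists>r > 0. ball 0 r \<subseteq> D \<and> h holomorphic_on ball 0 r)
      else (\<forall>j \<le> e. complex_of_real (q ^ j) * x \<in> D))"

definition qconv_term :: "real \<Rightarrow> real \<Rightarrow> (complex \<Rightarrow> complex) \<Rightarrow> (complex \<Rightarrow> complex) \<Rightarrow> complex \<Rightarrow> nat \<Rightarrow> complex" where
  "qconv_term q \<gamma> f h x e = (-1) ^ e * qmoment q \<gamma> f e / complex_of_real (qfact q e) * qderivs q e h x"

definition qconv_defined :: "real \<Rightarrow> real \<Rightarrow> (complex \<Rightarrow> complex) \<Rightarrow> complex set \<Rightarrow> (complex \<Rightarrow> complex) \<Rightarrow> complex \<Rightarrow> bool" where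
  "qconv_defined q \<gamma> f D h x \<longleftrightarrow>
     (\<forall>e. qderivs_defined q D h e x) \<and> summable (\<lambda>e. norm (qconv_term q \<gamma> f h x e))"

definition qconv :: "real \<Rightarrow> real \<Rightarrow> (complex \<Rightarrow> complex) \<Rightarrow> (complex \<Rightarrow> complex) \<Rightarrow> complex \<Rightarrow> complex" where
  "qconv q \<gamma> f h x = suminf (qconv_term q \<gamma> f h x)"

definition qconv_zero :: "real \<Rightarrow> real \<Rightarrow> (complex \<Rightarrow> complex) \<Rightarrow> complex set \<Rightarrow> (complex \<Rightarrow> complex) \<Rightarrow> bool" where
  "qconv_zero q \<gamma> f D h \<longleftrightarrow> (\<forall>x. qconv_defined q \<gamma> f D h x \<longrightarrow> qconv q \<gamma> f h x = 0)"

end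

theory Submission
  imports Defs
begin

(* Multiplying f *_gamma g = 0 by x^n and integrating over L(gamma') gives
   sum_e (-1)^e mu_e(f)/[e]_q! int (d^e g)(x) x^n = 0.  By q-integration by parts,
   int (d^e g)(x) x^m vanishes for m < e and is a nonzero multiple of mu_(m-e)(g) for m >= e.
   Taking n = a + b, where a and b index the first nonvanishing moments of f and g, only the
   term e = a survives, and it is nonzero.  Hence all moments of f or all moments of g vanish,
   and then every convolution with that function vanishes term by term.
   Exchanging the two sums needs geometric bounds on d^e g over the lattice: near 0 they come
   from the power series of the holomorphic extension of g, away from 0 from the integrability
   of g(x) x^t for every t. *)

lemma summable_on_int_power_abs:
  fixes q :: real
  assumes "0 \<le> q" "q < 1"
  shows "(\<lambda>k::int. q ^ nat \<bar>k\<bar>) summable_on UNIV"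
proof -
  have geom: "(\<lambda>n::nat. q ^ n) summable_on UNIV"
    using assms by (subst summable_on_UNIV_nonneg_real_iff) (auto intro: summable_geometric)
  have int_split: "(UNIV::int set) = range int \<union> range (\<lambda>n. - int n - 1)"
  proof (intro set_eqI iffI)
    fix k :: int
    show "k \<in> range int \<union> range (\<lambda>n. - int n - 1)"
    proof (cases "k \<ge> 0")
      case True then show ?thesis by (auto intro: image_eqI[where x="nat k"])
    next
      case False then show ?thesis by (auto intro!: image_eqI[where x="nat (-k-1)"])
    qed
  qed simp
  have "(\<lambda>k::int. q ^ nat \<bar>k\<bar>) summable_on range int"
    by (subst summable_on_reindex) (auto simp: o_def geom)
  moreover have "(\<lambda>k::int. q ^ nat \<bar>k\<bar>) summable_on range (\<lambda>n. - int n - 1)"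
  proof (subst summable_on_reindex)
    show "inj_on (\<lambda>n. - int n - 1) UNIV" by (auto simp: inj_on_def)
    have "(\<lambda>n. q * q ^ n) summable_on UNIV" using geom by (rule summable_on_cmult_right)
    then show "((\<lambda>k::int. q ^ nat \<bar>k\<bar>) \<circ> (\<lambda>n. - int n - 1)) summable_on UNIV"
      by (simp add: o_def nat_add_distrib)
  qed
  ultimately show ?thesis using int_split by (metis summable_on_union)
qed

lemma power_int_nonneg_eq_power_abs: "0 \<le> k \<Longrightarrow> x powi k = x ^ nat \<bar>k\<bar>"
  by (simp add: power_int_def)

lemma inverse_power_int_neg_eq_power_abs:
  fixes x :: "'a::field"
  shows "k < 0 \<Longrightarrow> inverse (x powi k) = x ^ nat \<bar>k\<bar>"
  by (simp add: power_int_def power_inverse)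

lemma qderivs_0: "qderivs q 0 h = h"
  by (simp add: qderivs_def)

lemma qderivs_Suc:
  "x \<noteq> 0 \<Longrightarrow> qderivs q (Suc e) h x = (qderivs q e h x - qderivs q e h (of_real q * x)) / (of_real (1 - q) * x)"
  by (simp add: qderivs_def qderiv_def)

definition qbracket :: "real \<Rightarrow> nat \<Rightarrow> real" where
  "qbracket q n = (1 - q ^ n) / (1 - q)"

lemma qbracket_pos: "0 < q \<Longrightarrow> q < 1 \<Longrightarrow> 0 < n \<Longrightarrow> 0 < qbracket q n"
  by (simp add: qbracket_def power_less_one_iff)

lemma qbracket_nonneg: "0 \<le> q \<Longrightarrow> q < 1 \<Longrightarrow> 0 \<le> qbracket q n"
  by (simp add: qbracket_def power_le_one)

lemma qbracket_le: "0 \<le> q \<Longrightarrow> q < 1 \<Longrightarrow> qbracket q n \<le> 1 / (1 - q)"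
  by (simp add: qbracket_def divide_right_mono)

lemma qfact_pos: "0 < q \<Longrightarrow> q < 1 \<Longrightarrow> 0 < qfact q e"
  unfolding qfact_def qbracket_def[symmetric] by (intro prod_pos) (simp add: qbracket_pos)

(* qfact_quot q n e = [n+e]_q! / [n]_q!, the coefficient of x^n in the e-th q-derivative of x^(n+e). *)
definition qfact_quot :: "real \<Rightarrow> nat \<Rightarrow> nat \<Rightarrow> real" where
  "qfact_quot q n e = (\<Prod>i<e. qbracket q (n + i + 1))"

lemma qfact_quot_Suc_left: "qfact_quot q (Suc n) e * qbracket q (Suc n) = qfact_quot q n (Suc e)"
  unfolding qfact_quot_def prod.lessThan_Suc_shift by (simp add: mult.commute)

lemma qfact_quot_nonneg: "0 \<le> q \<Longrightarrow> q < 1 \<Longrightarrow> 0 \<le> qfact_quot q n e"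
  unfolding qfact_quot_def by (intro prod_nonneg) (simp add: qbracket_nonneg)

lemma qfact_quot_le: "0 \<le> q \<Longrightarrow> q < 1 \<Longrightarrow> qfact_quot q n e \<le> (1 / (1 - q)) ^ e"
  unfolding qfact_quot_def using prod_mono[of "{..<e}" "\<lambda>i. qbracket q (n + i + 1)" "\<lambda>_. 1 / (1 - q)"]
  by (simp add: qbracket_nonneg qbracket_le)

definition qconv_coeff :: "real \<Rightarrow> real \<Rightarrow> (complex \<Rightarrow> complex) \<Rightarrow> nat \<Rightarrow> complex" where
  "qconv_coeff q \<gamma> f e = (-1) ^ e * qmoment q \<gamma> f e / complex_of_real (qfact q e)"

lemma qconv_term_eq: "qconv_term q \<gamma> f h x = (\<lambda>e. qconv_coeff q \<gamma> f e * qderivs q e h x)"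
  by (simp add: qconv_term_def qconv_coeff_def fun_eq_iff)

lemma qconv_coeff_eq_0_iff: "0 < q \<Longrightarrow> q < 1 \<Longrightarrow> qconv_coeff q \<gamma> f e = 0 \<longleftrightarrow> qmoment q \<gamma> f e = 0"
  using qfact_pos[of q e] by (simp add: qconv_coeff_def)

lemma I_E_qconv_coeff_summable:
  assumes "I_E q \<gamma> f" "0 \<le> A"
  shows "summable (\<lambda>e. norm (qconv_coeff q \<gamma> f e) * A ^ e)"
proof -
  have "summable (\<lambda>e. qmoment q \<gamma> f e * (of_real (A + 1)) ^ e / complex_of_real (qfact q e))"
    using assms(1) unfolding I_E_def by blast
  then have "summable (\<lambda>e. (qmoment q \<gamma> f e / complex_of_real (qfact q e)) * (of_real (A + 1)) ^ e)"
    by (simp add: field_simps)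
  moreover have "norm (complex_of_real A) < norm (complex_of_real (A + 1))"
    unfolding norm_of_real using assms(2) by simp
  ultimately have "summable (\<lambda>e. norm ((qmoment q \<gamma> f e / complex_of_real (qfact q e)) * (of_real A) ^ e))"
    by (rule powser_insidea)
  then show ?thesis
    using assms(2) by (simp add: qconv_coeff_def norm_mult norm_divide norm_power)
qed

lemma qconv_zero_if_moments_eq_0:
  assumes "\<forall>e. qmoment q \<gamma> f e = 0"
  shows "qconv_zero q \<gamma> f D h"
  using assms by (simp add: qconv_zero_def qconv_def qconv_term_eq qconv_coeff_def)

section \<open>Sums over the q-lattice\<close>

definition qlat_point :: "real \<Rightarrow> real \<Rightarrow> int \<Rightarrow> real \<Rightarrow> complex" where
  "qlat_point q c k \<epsilon> = complex_of_real (\<epsilon> * q powi k * c)"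

lemma qint_summand_qlat_point:
  "qint_summand q c F (k, \<epsilon>) = complex_of_real (q powi k * c) * F (qlat_point q c k \<epsilon>)"
  by (simp add: qint_summand_def qlat_point_def)

locale qlattice =
  fixes q c :: real
  assumes q_pos: "0 < q" and q_less_1: "q < 1" and c_pos: "0 < c"
begin

abbreviation Idx :: "(int \<times> real) set" where
  "Idx \<equiv> UNIV \<times> {-1, 1}"

abbreviation pt :: "int \<Rightarrow> real \<Rightarrow> complex" where
  "pt \<equiv> qlat_point q c"

lemma q_powi_pos: "0 < q powi k"
  using q_pos by simp

lemma q_powi_le_1: "0 \<le> k \<Longrightarrow> q powi k \<le> 1"
  using q_pos q_less_1 by (simp add: power_int_nonneg_eq_power_abs power_le_one)

lemma q_powi_ge_1:
  assumes "k < 0" shows "1 \<le> q powi k"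
proof -
  have "inverse (q powi k) \<le> 1"
    using inverse_power_int_neg_eq_power_abs[where x=q, OF assms] q_pos q_less_1 by (simp add: power_le_one)
  then show ?thesis using q_powi_pos[of k] by (simp add: field_simps)
qed

lemma pt_Suc: "pt (k + 1) \<epsilon> = of_real q * pt k \<epsilon>"
  using q_pos by (simp add: qlat_point_def power_int_add)

lemma of_real_power_mult_pt: "of_real (q ^ j) * pt k \<epsilon> = pt (k + int j) \<epsilon>"
  using q_pos by (simp add: qlat_point_def power_int_add)

lemma pt_minus: "pt k (-1) = - pt k 1"
  by (simp add: qlat_point_def)

lemma norm_pt: "\<epsilon> \<in> {-1, 1} \<Longrightarrow> norm (pt k \<epsilon>) = q powi k * c"
  using q_pos c_pos by (simp only: qlat_point_def norm_of_real) (auto simp: abs_mult)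

lemma norm_pt_le: "0 \<le> k \<Longrightarrow> \<epsilon> \<in> {-1, 1} \<Longrightarrow> norm (pt k \<epsilon>) \<le> c"
  using norm_pt q_powi_le_1 c_pos by (simp add: mult_left_le_one_le)

lemma pt_neq_0: "\<epsilon> \<in> {-1, 1} \<Longrightarrow> pt k \<epsilon> \<noteq> 0"
  using norm_pt[of \<epsilon> k] q_powi_pos[of k] c_pos by auto

lemma pt_in_qlat: "\<epsilon> \<in> {-1, 1} \<Longrightarrow> pt k \<epsilon> \<in> qlat q c"
  unfolding qlat_def qlat_point_def by blast

lemma norm_qint_summand_pt:
  assumes "\<epsilon> \<in> {-1, 1}"
  shows "norm (qint_summand q c (\<lambda>x. H x * x ^ m) (k, \<epsilon>))
     = c ^ Suc m * (norm (H (pt k \<epsilon>)) * (q powi k) ^ Suc m)"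
  unfolding qint_summand_qlat_point norm_mult norm_of_real norm_power norm_pt[OF assms]
  using q_pos c_pos by (simp add: abs_mult power_mult_distrib algebra_simps)

lemma lattice_geometric_summable: "(\<lambda>x. K * q ^ nat \<bar>fst x\<bar>) summable_on Idx"
proof -
  have "(\<lambda>x. q ^ nat \<bar>fst x\<bar>) summable_on Idx"
  proof (rule summable_on_SigmaI[where g = "\<lambda>k. 2 * q ^ nat \<bar>k\<bar>"])
    show "(\<lambda>k. 2 * q ^ nat \<bar>k\<bar>) summable_on UNIV"
      using summable_on_int_power_abs q_pos q_less_1 by (intro summable_on_cmult_right) auto
  qed (use q_pos in \<open>auto intro!: has_sum_finiteI\<close>)
  then show ?thesis by (rule summable_on_cmult_right)
qed

lemma lattice_summable_if_bounded:
  fixes u :: "int \<times> real \<Rightarrow> 'a::banach"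
  assumes "\<And>k \<epsilon>. \<epsilon> \<in> {-1, 1} \<Longrightarrow> norm (u (k, \<epsilon>)) \<le> K * q ^ nat \<bar>k\<bar>"
  shows "u summable_on Idx"
  by (rule abs_summable_summable, rule Infinite_Sum.abs_summable_on_comparison_test'
      [OF lattice_geometric_summable[of K]]) (use assms in auto)

lemma lattice_infsum_swap:
  fixes u :: "int \<times> real \<Rightarrow> nat \<Rightarrow> complex"
  assumes bound: "\<And>k \<epsilon> e. \<epsilon> \<in> {-1, 1} \<Longrightarrow> norm (u (k, \<epsilon>) e) \<le> \<alpha> e * (K * q ^ nat \<bar>k\<bar>)"
    and "\<alpha> summable_on UNIV" and "\<And>e. 0 \<le> \<alpha> e" and "0 \<le> K"
  shows "infsum (\<lambda>x. infsum (u x) UNIV) Idx = infsum (\<lambda>e. infsum (\<lambda>x. u x e) Idx) UNIV"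
proof -
  have "(\<lambda>(x, e). \<alpha> e * (K * q ^ nat \<bar>fst x\<bar>)) summable_on Idx \<times> UNIV"
  proof (rule summable_on_SigmaI[where g = "\<lambda>x. infsum \<alpha> UNIV * (K * q ^ nat \<bar>fst x\<bar>)"])
    show "(\<lambda>x. infsum \<alpha> UNIV * (K * q ^ nat \<bar>fst x\<bar>)) summable_on Idx"
      using lattice_geometric_summable[of K] by (rule summable_on_cmult_right)
  qed (use assms q_pos in \<open>auto intro!: has_sum_cmult_left\<close>)
  then have "(\<lambda>y. norm ((\<lambda>(x, e). u x e) y)) summable_on Idx \<times> UNIV"
    by (rule Infinite_Sum.abs_summable_on_comparison_test') (use bound in auto)
  then have "(\<lambda>(x, e). u x e) summable_on Idx \<times> UNIV" by (rule abs_summable_summable)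
  then show ?thesis by (rule infsum_swap_banach)
qed

lemma bij_betw_lattice_shift: "bij_betw (\<lambda>(k, \<epsilon>). (k + 1, \<epsilon>)) Idx Idx"
  by (rule bij_betwI[where g = "\<lambda>(k, \<epsilon>). (k - 1, \<epsilon>)"]) auto

lemma qint_summand_qdiff_times_power:
  assumes qdiff: "H' (pt k \<epsilon>) = (H (pt k \<epsilon>) - H (pt (k + 1) \<epsilon>)) / (of_real (1 - q) * pt k \<epsilon>)"
    and \<epsilon>: "\<epsilon> \<in> {-1, 1}"
  shows "qint_summand q c (\<lambda>x. H' x * x ^ Suc j) (k, \<epsilon>)
       = (qint_summand q c (\<lambda>x. H x * x ^ j) (k, \<epsilon>)
          - qint_summand q c (\<lambda>x. H x * x ^ j) (k + 1, \<epsilon>) / of_real (q ^ Suc j)) / of_real (1 - q)"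
proof -
  define w where "w = complex_of_real (q powi k * c)"
  define Q where "Q = complex_of_real (q ^ Suc j)"
  define L where "L = complex_of_real (1 - q)"
  have "Q \<noteq> 0" "L \<noteq> 0" using q_pos q_less_1 by (simp_all add: Q_def L_def)
  have shift: "qint_summand q c (\<lambda>x. H x * x ^ j) (k + 1, \<epsilon>) = Q * (w * H (of_real q * pt k \<epsilon>) * pt k \<epsilon> ^ j)"
    unfolding qint_summand_qlat_point pt_Suc using q_pos
    by (simp add: Q_def w_def power_int_add power_mult_distrib algebra_simps)
  have "qint_summand q c (\<lambda>x. H' x * x ^ Suc j) (k, \<epsilon>)
      = w * ((H (pt k \<epsilon>) - H (of_real q * pt k \<epsilon>)) / (L * pt k \<epsilon>) * pt k \<epsilon> ^ Suc j)"
    unfolding qint_summand_qlat_point qdiff pt_Suc w_def L_def ..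
  also have "\<dots> = (w * (H (pt k \<epsilon>) * pt k \<epsilon> ^ j) - Q * (w * H (of_real q * pt k \<epsilon>) * pt k \<epsilon> ^ j) / Q) / L"
    using pt_neq_0[OF \<epsilon>] \<open>L \<noteq> 0\<close> \<open>Q \<noteq> 0\<close> by (simp add: field_simps)
  finally show ?thesis
    unfolding shift by (simp add: qint_summand_qlat_point w_def Q_def L_def)
qed

lemma lattice_sum_qdiff_times_power:
  assumes qdiff: "\<And>k \<epsilon>. \<epsilon> \<in> {-1, 1} \<Longrightarrow>
      H' (pt k \<epsilon>) = (H (pt k \<epsilon>) - H (pt (k + 1) \<epsilon>)) / (of_real (1 - q) * pt k \<epsilon>)"
    and summable: "qint_summand q c (\<lambda>x. H x * x ^ j) summable_on Idx"
  shows "infsum (qint_summand q c (\<lambda>x. H' x * x ^ Suc j)) Idx =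
         - of_real (qbracket q (Suc j) / q ^ Suc j) * infsum (qint_summand q c (\<lambda>x. H x * x ^ j)) Idx"
proof -
  define u where "u = qint_summand q c (\<lambda>x. H x * x ^ j)"
  define Q where "Q = complex_of_real (q ^ Suc j)"
  define L where "L = complex_of_real (1 - q)"
  have "Q \<noteq> 0" "L \<noteq> 0" using q_pos q_less_1 by (simp_all add: Q_def L_def)
  have summand_eq: "qint_summand q c (\<lambda>x. H' x * x ^ Suc j) x
      = u x * (1 / L) + u ((\<lambda>(k, \<epsilon>). (k + 1, \<epsilon>)) x) * (- 1 / (Q * L))"
    if "x \<in> Idx" for x
  proof -
    from that obtain k \<epsilon> where x: "x = (k, \<epsilon>)" and \<epsilon>: "\<epsilon> \<in> {-1, 1}" by auto
    show ?thesis
      using qint_summand_qdiff_times_power[where H = H and H' = H' and j = j and k = k, OF qdiff[OF \<epsilon>] \<epsilon>]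
      unfolding x u_def Q_def[symmetric] L_def[symmetric] by (simp add: diff_divide_distrib)
  qed
  have "(u has_sum infsum u Idx) Idx" using summable by (simp add: u_def)
  moreover have "((\<lambda>x. u ((\<lambda>(k, \<epsilon>). (k + 1, \<epsilon>)) x)) has_sum infsum u Idx) Idx"
    using has_sum_reindex_bij_betw[OF bij_betw_lattice_shift, of u] \<open>(u has_sum infsum u Idx) Idx\<close>
    by (simp add: o_def)
  ultimately have "((\<lambda>x. u x * (1 / L) + u ((\<lambda>(k, \<epsilon>). (k + 1, \<epsilon>)) x) * (- 1 / (Q * L)))
      has_sum (infsum u Idx * (1 / L) + infsum u Idx * (- 1 / (Q * L)))) Idx"
    by (intro has_sum_add has_sum_cmult_left)
  then have "(qint_summand q c (\<lambda>x. H' x * x ^ Suc j) has_sum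
      (infsum u Idx * (1 / L) + infsum u Idx * (- 1 / (Q * L)))) Idx"
    by (simp only: has_sum_cong[OF summand_eq])
  then have "infsum (qint_summand q c (\<lambda>x. H' x * x ^ Suc j)) Idx
      = infsum u Idx * (1 / L) + infsum u Idx * (- 1 / (Q * L))"
    by (rule infsumI)
  also have "\<dots> = (1 - 1 / Q) / L * infsum u Idx"
    using \<open>Q \<noteq> 0\<close> \<open>L \<noteq> 0\<close> by (simp add: field_simps)
  also have "(1 - 1 / Q) / L = - of_real (qbracket q (Suc j) / q ^ Suc j)"
    using q_pos q_less_1 by (simp add: Q_def L_def qbracket_def field_simps)
  finally show ?thesis by (simp add: u_def)
qed

(* Only the odd part of H needs to be summable over the lattice: H itself tends to H(0) at 0. *)
lemma lattice_sum_qdiff_eq_0: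
  assumes qdiff: "\<And>k \<epsilon>. \<epsilon> \<in> {-1, 1} \<Longrightarrow>
      H' (pt k \<epsilon>) = (H (pt k \<epsilon>) - H (pt (k + 1) \<epsilon>)) / (of_real (1 - q) * pt k \<epsilon>)"
    and summable: "qint_summand q c H' summable_on Idx"
    and odd_summable: "(\<lambda>k. H (pt k 1) - H (pt k (-1))) summable_on UNIV"
  shows "infsum (qint_summand q c H') Idx = 0"
proof -
  define V where "V = (\<lambda>k. H (pt k 1) - H (pt k (-1)))"
  define L where "L = complex_of_real (1 - q)"
  have "L \<noteq> 0" using q_less_1 by (simp add: L_def)
  have summand: "qint_summand q c H' (k, \<epsilon>) = of_real \<epsilon> * (H (pt k \<epsilon>) - H (pt (k + 1) \<epsilon>)) / L"
    if \<epsilon>: "\<epsilon> \<in> {-1, 1}" for k \<epsilon>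
  proof -
    have "complex_of_real (q powi k * c) = of_real \<epsilon> * pt k \<epsilon>"
      using \<epsilon> by (auto simp: qlat_point_def)
    then show ?thesis
      using pt_neq_0[OF \<epsilon>] \<open>L \<noteq> 0\<close>
      unfolding qint_summand_qlat_point qdiff[OF \<epsilon>] by (simp add: L_def field_simps)
  qed
  have "infsum (qint_summand q c H') Idx
      = infsum (\<lambda>k. infsum (\<lambda>\<epsilon>. qint_summand q c H' (k, \<epsilon>)) {-1, 1}) UNIV"
    by (rule infsum_Sigma_banach[symmetric]) (use summable in simp)
  also have "\<dots> = infsum (\<lambda>k. V k * (1 / L) + V (k + 1) * (- 1 / L)) UNIV"
    by (rule infsum_cong) (use \<open>L \<noteq> 0\<close> in \<open>simp add: summand V_def field_simps\<close>)
  also have "\<dots> = infsum V UNIV * (1 / L) + infsum V UNIV * (- 1 / L)"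
  proof (rule infsumI, intro has_sum_add has_sum_cmult_left)
    show "(V has_sum infsum V UNIV) UNIV" using odd_summable by (simp add: V_def)
    have "bij_betw (\<lambda>k::int. k + 1) UNIV UNIV"
      by (rule bij_betwI[where g = "\<lambda>k. k - 1"]) auto
    then show "((\<lambda>k. V (k + 1)) has_sum infsum V UNIV) UNIV"
      using has_sum_reindex_bij_betw[of "\<lambda>k. k + 1" UNIV UNIV V] odd_summable
      by (simp add: V_def)
  qed
  finally show ?thesis by simp
qed

end

section \<open>q-derivatives of a function holomorphic near the origin\<close>

locale qlattice_holomorphic = qlattice +
  fixes g F :: "complex \<Rightarrow> complex" and r :: real
  assumes c_less_r: "c < r"
    and F_holomorphic: "F holomorphic_on ball 0 r"
    and F_eq_g: "\<And>x. x \<in> qlat q c \<inter> ball 0 r \<Longrightarrow> F x = g x"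
    and g_I_inf: "I_inf q c g"
begin

abbreviation Dg :: "nat \<Rightarrow> complex \<Rightarrow> complex" where
  "Dg e \<equiv> qderivs q e g"

definition taylor_coeff :: "nat \<Rightarrow> complex" where
  "taylor_coeff n = (deriv ^^ n) F 0 / fact n"

(* The power series of F, q-differentiated e times termwise. *)
definition qderiv_series :: "nat \<Rightarrow> complex \<Rightarrow> complex" where
  "qderiv_series e x = (\<Sum>n. taylor_coeff (n + e) * of_real (qfact_quot q n e) * x ^ n)"

definition taylor_majorant :: real where
  "taylor_majorant = (\<Sum>n. norm (taylor_coeff n) * c ^ n)"

definition qdiff_factor :: real where
  "qdiff_factor = 1 / ((1 - q) * c)"

lemma qdiff_factor_pos: "0 < qdiff_factor"
  using q_less_1 c_pos by (simp add: qdiff_factor_def)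

lemma taylor_sums: "norm w < r \<Longrightarrow> (\<lambda>n. taylor_coeff n * w ^ n) sums F w"
  using holomorphic_power_series[OF F_holomorphic, of w] by (simp add: taylor_coeff_def)

lemma taylor_majorant_summable: "summable (\<lambda>n. norm (taylor_coeff n) * c ^ n)"
proof -
  have "norm (complex_of_real ((c + r) / 2)) < r"
    unfolding norm_of_real using c_less_r c_pos by simp
  then have "summable (\<lambda>n. taylor_coeff n * (of_real ((c + r) / 2)) ^ n)"
    by (rule sums_summable[OF taylor_sums])
  moreover have "norm (complex_of_real c) < norm (complex_of_real ((c + r) / 2))"
    unfolding norm_of_real using c_less_r c_pos by simp
  ultimately have "summable (\<lambda>n. norm (taylor_coeff n * (complex_of_real c) ^ n))"
    by (rule powser_insidea)
  then show ?thesis using c_pos by (simp add: norm_mult norm_power)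
qed

lemma taylor_majorant_nonneg: "0 \<le> taylor_majorant"
  unfolding taylor_majorant_def using c_pos by (intro suminf_nonneg taylor_majorant_summable) simp

lemma qderiv_series_majorant_summable:
    "summable (\<lambda>n. norm (taylor_coeff (n + e)) * qfact_quot q n e * c ^ n)"
  and qderiv_series_majorant_le:
    "(\<Sum>n. norm (taylor_coeff (n + e)) * qfact_quot q n e * c ^ n) \<le> qdiff_factor ^ e * taylor_majorant"
proof -
  have factor_power: "qdiff_factor ^ e = 1 / ((1 - q) ^ e * c ^ e)"
    by (simp add: qdiff_factor_def power_one_over power_mult_distrib)
  have tail_summable: "summable (\<lambda>n. norm (taylor_coeff (n + e)) * c ^ (n + e))"
    using summable_ignore_initial_segment[OF taylor_majorant_summable, of e] by simp
  have term_le: "norm (taylor_coeff (n + e)) * qfact_quot q n e * c ^ n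
      \<le> qdiff_factor ^ e * (norm (taylor_coeff (n + e)) * c ^ (n + e))" for n
  proof -
    have "norm (taylor_coeff (n + e)) * qfact_quot q n e * c ^ n
        \<le> norm (taylor_coeff (n + e)) * (1 / (1 - q)) ^ e * c ^ n"
      using qfact_quot_le[of q n e] q_pos q_less_1 c_pos
      by (intro mult_right_mono mult_left_mono) auto
    also have "\<dots> = qdiff_factor ^ e * (norm (taylor_coeff (n + e)) * c ^ (n + e))"
      using c_pos q_less_1 by (simp add: factor_power power_add power_one_over field_simps)
    finally show ?thesis .
  qed
  have term_nonneg: "0 \<le> norm (taylor_coeff (n + e)) * qfact_quot q n e * c ^ n" for n
    using qfact_quot_nonneg[of q n e] q_pos q_less_1 c_pos by simp
  show summable: "summable (\<lambda>n. norm (taylor_coeff (n + e)) * qfact_quot q n e * c ^ n)"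
    by (rule summable_comparison_test'[OF summable_mult[OF tail_summable, of "qdiff_factor ^ e"]])
       (use term_le term_nonneg in auto)
  have "(\<Sum>n. norm (taylor_coeff (n + e)) * qfact_quot q n e * c ^ n)
      \<le> (\<Sum>n. qdiff_factor ^ e * (norm (taylor_coeff (n + e)) * c ^ (n + e)))"
    by (rule suminf_le[OF term_le summable summable_mult[OF tail_summable]])
  also have "\<dots> = qdiff_factor ^ e * (\<Sum>n. norm (taylor_coeff (n + e)) * c ^ (n + e))"
    using tail_summable by (rule suminf_mult)
  also have "\<dots> \<le> qdiff_factor ^ e * taylor_majorant"
  proof (rule mult_left_mono)
    have "taylor_majorant = (\<Sum>n. norm (taylor_coeff (n + e)) * c ^ (n + e)) + (\<Sum>i<e. norm (taylor_coeff i) * c ^ i)"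
      unfolding taylor_majorant_def by (rule suminf_split_initial_segment[OF taylor_majorant_summable])
    moreover have "0 \<le> (\<Sum>i<e. norm (taylor_coeff i) * c ^ i)" using c_pos by (auto intro: sum_nonneg)
    ultimately show "(\<Sum>n. norm (taylor_coeff (n + e)) * c ^ (n + e)) \<le> taylor_majorant" by linarith
  qed (use qdiff_factor_pos in simp)
  finally show "(\<Sum>n. norm (taylor_coeff (n + e)) * qfact_quot q n e * c ^ n) \<le> qdiff_factor ^ e * taylor_majorant" .
qed

lemma norm_qderiv_series_term_le:
  "norm x \<le> c \<Longrightarrow> norm (taylor_coeff (n + e) * of_real (qfact_quot q n e) * x ^ n)
     \<le> norm (taylor_coeff (n + e)) * qfact_quot q n e * c ^ n"
  using qfact_quot_nonneg[of q n e] q_pos q_less_1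
  by (auto simp: norm_mult norm_power intro!: mult_left_mono power_mono)

lemma qderiv_series_summable:
  "norm x \<le> c \<Longrightarrow> summable (\<lambda>n. norm (taylor_coeff (n + e) * of_real (qfact_quot q n e) * x ^ n))"
  by (rule summable_comparison_test'[OF qderiv_series_majorant_summable])
     (use norm_qderiv_series_term_le in auto)

lemma norm_qderiv_series_le:
  assumes "norm x \<le> c"
  shows "norm (qderiv_series e x) \<le> qdiff_factor ^ e * taylor_majorant"
proof -
  have "norm (qderiv_series e x) \<le> (\<Sum>n. norm (taylor_coeff (n + e) * of_real (qfact_quot q n e) * x ^ n))"
    unfolding qderiv_series_def by (rule summable_norm[OF qderiv_series_summable[OF assms]])
  also have "\<dots> \<le> (\<Sum>n. norm (taylor_coeff (n + e)) * qfact_quot q n e * c ^ n)"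
    by (rule suminf_le)
       (use norm_qderiv_series_term_le[OF assms] qderiv_series_summable[OF assms]
          qderiv_series_majorant_summable in auto)
  also have "\<dots> \<le> qdiff_factor ^ e * taylor_majorant" by (rule qderiv_series_majorant_le)
  finally show ?thesis .
qed

lemma norm_qderiv_series_odd_part_le:
  assumes x: "norm x \<le> c"
  shows "norm (qderiv_series e x - qderiv_series e (- x)) \<le> 2 * (norm x / c) * (qdiff_factor ^ e * taylor_majorant)"
proof -
  define t where "t = (\<lambda>n. taylor_coeff (n + e) * of_real (qfact_quot q n e))"
  define m where "m = (\<lambda>n. norm (taylor_coeff (n + e)) * qfact_quot q n e * c ^ n)"
  have "norm (- x) \<le> c" using x by simp
  have "summable (\<lambda>n. t n * x ^ n)"
    unfolding t_def by (rule summable_norm_cancel[OF qderiv_series_summable[OF x]])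
  moreover have "summable (\<lambda>n. t n * (- x) ^ n)"
    unfolding t_def by (rule summable_norm_cancel[OF qderiv_series_summable[OF \<open>norm (- x) \<le> c\<close>]])
  ultimately
  have diff: "qderiv_series e x - qderiv_series e (- x) = (\<Sum>n. t n * x ^ n - t n * (- x) ^ n)"
    unfolding qderiv_series_def t_def by (simp add: suminf_diff)
  have term_le: "norm (t n * x ^ n - t n * (- x) ^ n) \<le> 2 * (norm x / c) * m n" for n
  proof (cases n)
    case 0 then show ?thesis
      using c_pos qfact_quot_nonneg[of q n e] q_pos q_less_1 by (simp add: t_def m_def)
  next
    case (Suc k)
    have "norm (x ^ n - (- x) ^ n) \<le> norm (x ^ n) + norm ((- x) ^ n)" by (rule norm_triangle_ineq4)
    also have "\<dots> = 2 * (norm x * norm x ^ k)" by (simp add: Suc norm_power norm_mult)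
    also have "\<dots> \<le> 2 * (norm x * c ^ k)" using x by (intro mult_left_mono power_mono) auto
    also have "\<dots> = 2 * (norm x / c) * c ^ n" using c_pos by (simp add: Suc)
    finally have bound: "norm (x ^ n - (- x) ^ n) \<le> 2 * (norm x / c) * c ^ n" .
    have "norm (t n * x ^ n - t n * (- x) ^ n) = norm (t n) * norm (x ^ n - (- x) ^ n)"
      by (simp add: right_diff_distrib[symmetric] norm_mult)
    also have "\<dots> \<le> norm (t n) * (2 * (norm x / c) * c ^ n)"
      by (rule mult_left_mono[OF bound]) simp
    also have "\<dots> = 2 * (norm x / c) * m n"
      using qfact_quot_nonneg[of q n e] q_pos q_less_1 by (simp add: t_def m_def norm_mult mult_ac)
    finally show ?thesis .
  qed
  have "summable (\<lambda>n. 2 * (norm x / c) * m n)"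
    unfolding m_def by (rule summable_mult[OF qderiv_series_majorant_summable])
  then have "norm (qderiv_series e x - qderiv_series e (- x)) \<le> (\<Sum>n. 2 * (norm x / c) * m n)"
    unfolding diff by (intro norm_suminf_le) (use term_le in auto)
  also have "\<dots> = 2 * (norm x / c) * (\<Sum>n. m n)"
    unfolding m_def by (rule suminf_mult[OF qderiv_series_majorant_summable])
  also have "\<dots> \<le> 2 * (norm x / c) * (qdiff_factor ^ e * taylor_majorant)"
    unfolding m_def using qderiv_series_majorant_le c_pos by (intro mult_left_mono) auto
  finally show ?thesis .
qed

lemma qdiff_qderiv_series:
  assumes x: "x \<noteq> 0" "norm x \<le> c"
  shows "(qderiv_series e x - qderiv_series e (of_real q * x)) / (of_real (1 - q) * x)
       = qderiv_series (Suc e) x"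
proof -
  have qx: "norm (of_real q * x) \<le> c"
    using x(2) q_pos q_less_1 mult_left_le_one_le[of "norm x" q] by (simp add: norm_mult)
  define t where "t = (\<lambda>n. taylor_coeff (n + e) * of_real (qfact_quot q n e) * x ^ n)"
  define t' where "t' = (\<lambda>n. taylor_coeff (n + e) * of_real (qfact_quot q n e) * (of_real q * x) ^ n)"
  have "summable t" unfolding t_def by (rule summable_norm_cancel[OF qderiv_series_summable[OF x(2)]])
  moreover have "summable t'" unfolding t'_def by (rule summable_norm_cancel[OF qderiv_series_summable[OF qx]])
  ultimately have summable_diff: "summable (\<lambda>n. t n - t' n)" by (rule summable_diff)
  have "qderiv_series e x - qderiv_series e (of_real q * x) = (\<Sum>n. t n - t' n)"
    using \<open>summable t\<close> \<open>summable t'\<close> unfolding qderiv_series_def t_def t'_def by (simp add: suminf_diff)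
  also have "\<dots> = (\<Sum>n. t (Suc n) - t' (Suc n))"
    using suminf_split_head[OF summable_diff] by (simp add: t_def t'_def)
  also have "\<dots> = (\<Sum>n. (of_real (1 - q) * x) * (taylor_coeff (n + Suc e) * of_real (qfact_quot q n (Suc e)) * x ^ n))"
  proof (rule arg_cong[where f = suminf], rule ext)
    fix n
    have "qfact_quot q (Suc n) e * (1 - q ^ Suc n) = (1 - q) * qfact_quot q n (Suc e)"
      using q_less_1 qfact_quot_Suc_left[of q n e] by (simp add: qbracket_def field_simps)
    from arg_cong[OF this, of complex_of_real]
    have coeff: "of_real (qfact_quot q (Suc n) e) * (1 - of_real q ^ Suc n)
        = (of_real (1 - q) * of_real (qfact_quot q n (Suc e)) :: complex)"
      by simp
    have "t (Suc n) - t' (Suc n)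
        = taylor_coeff (Suc n + e) * (of_real (qfact_quot q (Suc n) e) * (1 - of_real q ^ Suc n)) * x ^ Suc n"
      by (simp add: t_def t'_def power_mult_distrib algebra_simps)
    also have "\<dots> = (of_real (1 - q) * x) * (taylor_coeff (n + Suc e) * of_real (qfact_quot q n (Suc e)) * x ^ n)"
      unfolding coeff by (simp add: algebra_simps)
    finally show "t (Suc n) - t' (Suc n) = \<dots>" .
  qed
  also have "\<dots> = (of_real (1 - q) * x) * qderiv_series (Suc e) x"
    unfolding qderiv_series_def by (rule suminf_mult[OF summable_norm_cancel[OF qderiv_series_summable[OF x(2)]]])
  finally have diff_eq: "qderiv_series e x - qderiv_series e (of_real q * x)
      = (of_real (1 - q) * x) * qderiv_series (Suc e) x" .
  have "of_real (1 - q) * x \<noteq> 0" using x(1) q_less_1 by simp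
  then show ?thesis unfolding diff_eq by (rule nonzero_mult_div_cancel_left)
qed

lemma qderivs_Suc_pt:
  assumes "\<epsilon> \<in> {-1, 1}"
  shows "Dg (Suc e) (pt k \<epsilon>) = (Dg e (pt k \<epsilon>) - Dg e (pt (k + 1) \<epsilon>)) / (of_real (1 - q) * pt k \<epsilon>)"
  unfolding pt_Suc by (rule qderivs_Suc[OF pt_neq_0[OF assms]])

lemma qderivs_eq_qderiv_series:
  "0 \<le> k \<Longrightarrow> \<epsilon> \<in> {-1, 1} \<Longrightarrow> Dg e (pt k \<epsilon>) = qderiv_series e (pt k \<epsilon>)"
proof (induction e arbitrary: k)
  case 0
  have "pt k \<epsilon> \<in> qlat q c \<inter> ball 0 r"
    using pt_in_qlat[OF 0(2)] norm_pt_le[OF 0] c_less_r by auto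
  then have "g (pt k \<epsilon>) = F (pt k \<epsilon>)" using F_eq_g by simp
  also have "\<dots> = (\<Sum>n. taylor_coeff n * (pt k \<epsilon>) ^ n)"
    using taylor_sums[of "pt k \<epsilon>"] norm_pt_le[OF 0] c_less_r by (simp add: sums_iff)
  finally show ?case by (simp add: qderivs_def qderiv_series_def qfact_quot_def)
next
  case (Suc e)
  have "Dg (Suc e) (pt k \<epsilon>)
      = (qderiv_series e (pt k \<epsilon>) - qderiv_series e (of_real q * pt k \<epsilon>)) / (of_real (1 - q) * pt k \<epsilon>)"
    using qderivs_Suc_pt[OF Suc(3)] Suc.IH[of k] Suc.IH[of "k + 1"] Suc(2,3) pt_Suc by simp
  also have "\<dots> = qderiv_series (Suc e) (pt k \<epsilon>)"
    by (rule qdiff_qderiv_series[OF pt_neq_0[OF Suc(3)] norm_pt_le[OF Suc(2,3)]])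
  finally show ?case .
qed

lemma norm_qderivs_inside_le:
  "0 \<le> k \<Longrightarrow> \<epsilon> \<in> {-1, 1} \<Longrightarrow> norm (Dg e (pt k \<epsilon>)) \<le> qdiff_factor ^ e * taylor_majorant"
  using qderivs_eq_qderiv_series norm_qderiv_series_le norm_pt_le by simp

lemma norm_qderivs_Suc_outside_le:
  assumes "k < 0" "\<epsilon> \<in> {-1, 1}"
  shows "norm (Dg (Suc e) (pt k \<epsilon>)) \<le> qdiff_factor * (norm (Dg e (pt k \<epsilon>)) + norm (Dg e (pt (k + 1) \<epsilon>)))"
proof -
  have denom: "(1 - q) * c \<le> norm (of_real (1 - q) * pt k \<epsilon>)"
    unfolding norm_mult norm_of_real norm_pt[OF assms(2)]
    using q_less_1 c_pos q_powi_ge_1[OF assms(1)] by simp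
  have "norm (Dg (Suc e) (pt k \<epsilon>)) = norm (Dg e (pt k \<epsilon>) - Dg e (pt (k + 1) \<epsilon>)) / norm (of_real (1 - q) * pt k \<epsilon>)"
    by (simp add: qderivs_Suc_pt[OF assms(2)] norm_divide)
  also have "\<dots> \<le> (norm (Dg e (pt k \<epsilon>)) + norm (Dg e (pt (k + 1) \<epsilon>))) / ((1 - q) * c)"
    using denom q_less_1 c_pos by (intro frac_le norm_triangle_ineq4) auto
  finally show ?thesis by (simp add: qdiff_factor_def)
qed

(* At x = pt k eps this is max 1 ((|x| / c)^t): the q-derivatives of g decay like |x|^-t away
   from 0, inherited from the integrability of g(x) x^t. *)
definition weight :: "nat \<Rightarrow> int \<Rightarrow> real" where
  "weight t k = (if k < 0 then (q powi k) ^ t else 1)"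

lemma weight_Suc_neg:
  assumes "k < 0"
  shows "weight t (k + 1) = (q powi k) ^ t * q ^ t"
proof -
  have "weight t (k + 1) = (q powi (k + 1)) ^ t"
  proof (cases "k + 1 < 0")
    case False
    then have "k + 1 = 0" using assms by linarith
    then show ?thesis by (simp add: weight_def)
  qed (simp add: weight_def)
  also have "\<dots> = (q powi k) ^ t * q ^ t"
    using q_pos by (simp add: power_int_add power_mult_distrib)
  finally show ?thesis .
qed

lemma weighted_g_bounded:
  "\<exists>Z. \<forall>k \<epsilon>. k < 0 \<longrightarrow> \<epsilon> \<in> {-1, 1} \<longrightarrow> norm (g (pt k \<epsilon>)) * (q powi k) ^ t \<le> Z"
proof -
  define f where "f = (\<lambda>p. norm (qint_summand q c (\<lambda>x. g x * x ^ t) p))"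
  have f_summable: "f summable_on Idx"
    using g_I_inf unfolding I_inf_def qintegrable_def f_def by blast
  have "norm (g (pt k \<epsilon>)) * (q powi k) ^ t \<le> infsum f Idx / c ^ Suc t"
    if k: "k < 0" and \<epsilon>: "\<epsilon> \<in> {-1, 1}" for k \<epsilon>
  proof -
    have "0 \<le> c ^ Suc t * (norm (g (pt k \<epsilon>)) * (q powi k) ^ t)"
      using c_pos q_powi_pos[of k] by simp
    then have "c ^ Suc t * (norm (g (pt k \<epsilon>)) * (q powi k) ^ t)
        \<le> c ^ Suc t * (norm (g (pt k \<epsilon>)) * (q powi k) ^ t) * q powi k"
      using mult_left_mono[OF q_powi_ge_1[OF k]] by simp
    also have "\<dots> = f (k, \<epsilon>)"
      unfolding f_def norm_qint_summand_pt[OF \<epsilon>] by (simp add: mult_ac)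
    also have "\<dots> \<le> infsum f Idx"
      using finite_sum_le_infsum[OF f_summable, of "{(k, \<epsilon>)}"] \<epsilon> by (simp add: f_def)
    finally show ?thesis using c_pos by (simp add: field_simps)
  qed
  then show ?thesis by blast
qed

lemma weighted_qderivs_Suc_outside_le:
  assumes "k < 0" "\<epsilon> \<in> {-1, 1}"
    and "norm (Dg e (pt k \<epsilon>)) * weight t k \<le> M"
    and "norm (Dg e (pt (k + 1) \<epsilon>)) * weight t (k + 1) \<le> M"
  shows "norm (Dg (Suc e) (pt k \<epsilon>)) * weight t k \<le> (1 + 1 / q ^ t) * qdiff_factor * M"
proof -
  define y where "y = (q powi k) ^ t"
  have weight_k: "weight t k = y" using assms(1) by (simp add: weight_def y_def)
  have "norm (Dg e (pt k \<epsilon>)) * y \<le> M" using assms(3) weight_k by simp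
  moreover have "norm (Dg e (pt (k + 1) \<epsilon>)) * y \<le> M / q ^ t"
    using assms(4) weight_Suc_neg[OF assms(1), of t] q_pos by (simp add: y_def field_simps)
  ultimately have "qdiff_factor * (norm (Dg e (pt k \<epsilon>)) * y + norm (Dg e (pt (k + 1) \<epsilon>)) * y)
      \<le> qdiff_factor * (M + M / q ^ t)"
    using qdiff_factor_pos by (intro mult_left_mono add_mono) auto
  then have "qdiff_factor * (norm (Dg e (pt k \<epsilon>)) + norm (Dg e (pt (k + 1) \<epsilon>))) * y
      \<le> (1 + 1 / q ^ t) * qdiff_factor * M"
    by (simp add: algebra_simps)
  moreover have "norm (Dg (Suc e) (pt k \<epsilon>)) * y
      \<le> qdiff_factor * (norm (Dg e (pt k \<epsilon>)) + norm (Dg e (pt (k + 1) \<epsilon>))) * y"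
    using norm_qderivs_Suc_outside_le[OF assms(1,2)] q_powi_pos[of k]
    by (intro mult_right_mono) (auto simp: y_def)
  ultimately show ?thesis using weight_k by simp
qed

lemma weighted_qderivs_bounded:
  "\<exists>C A. 0 \<le> C \<and> 0 < A \<and>
     (\<forall>e k \<epsilon>. \<epsilon> \<in> {-1, 1} \<longrightarrow> norm (Dg e (pt k \<epsilon>)) * weight t k \<le> C * A ^ e)"
proof -
  obtain Z where Z: "\<And>k \<epsilon>. k < 0 \<Longrightarrow> \<epsilon> \<in> {-1, 1} \<Longrightarrow> norm (g (pt k \<epsilon>)) * (q powi k) ^ t \<le> Z"
    using weighted_g_bounded[of t] by blast
  define C where "C = max taylor_majorant Z"
  define A where "A = (1 + 1 / q ^ t) * qdiff_factor"
  have "0 \<le> C" using taylor_majorant_nonneg by (simp add: C_def)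
  have "qdiff_factor \<le> A" using qdiff_factor_pos q_pos by (simp add: A_def field_simps)
  then have "0 < A" using qdiff_factor_pos by simp
  have inside: "norm (Dg e (pt k \<epsilon>)) * weight t k \<le> C * A ^ e" if "0 \<le> k" "\<epsilon> \<in> {-1, 1}" for e k \<epsilon>
  proof -
    have "norm (Dg e (pt k \<epsilon>)) \<le> qdiff_factor ^ e * taylor_majorant"
      using norm_qderivs_inside_le[OF that] .
    also have "\<dots> \<le> A ^ e * C"
      using \<open>qdiff_factor \<le> A\<close> qdiff_factor_pos taylor_majorant_nonneg
      by (intro mult_mono power_mono) (auto simp: C_def)
    finally show ?thesis using that by (simp add: weight_def mult.commute)
  qed
  have "norm (Dg e (pt k \<epsilon>)) * weight t k \<le> C * A ^ e" if \<epsilon>: "\<epsilon> \<in> {-1, 1}" for e k \<epsilon>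
  proof (induction e arbitrary: k)
    case 0
    show ?case
      using inside[OF _ \<epsilon>, of k 0] Z[OF _ \<epsilon>, of k] by (cases "k < 0") (auto simp: weight_def qderivs_0 C_def)
  next
    case (Suc e)
    show ?case
    proof (cases "k < 0")
      case True
      have "norm (Dg (Suc e) (pt k \<epsilon>)) * weight t k \<le> (1 + 1 / q ^ t) * qdiff_factor * (C * A ^ e)"
        by (rule weighted_qderivs_Suc_outside_le[OF True \<epsilon> Suc.IH Suc.IH])
      then show ?thesis unfolding A_def[symmetric] by (simp add: mult_ac)
    next
      case False
      then show ?thesis using inside[OF _ \<epsilon>, of k "Suc e"] by simp
    qed
  qed
  then show ?thesis using \<open>0 \<le> C\<close> \<open>0 < A\<close> by blast
qed

lemma qderivs_bounded:
  "\<exists>C A. 0 \<le> C \<and> 0 < A \<and> (\<forall>e k \<epsilon>. \<epsilon> \<in> {-1, 1} \<longrightarrow> norm (Dg e (pt k \<epsilon>)) \<le> C * A ^ e)"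
proof -
  have "weight 0 k = 1" for k by (simp add: weight_def)
  then show ?thesis using weighted_qderivs_bounded[of 0] by simp
qed

(* The weight of exponent m + 2 absorbs the factor |x|^(m+1) of the summand and leaves a
   spare factor q^|k| for k < 0. *)
lemma norm_qint_summand_qderivs_le:
  "\<exists>K A. 0 \<le> K \<and> 0 < A \<and> (\<forall>e k \<epsilon>. \<epsilon> \<in> {-1, 1} \<longrightarrow>
     norm (qint_summand q c (\<lambda>x. Dg e x * x ^ m) (k, \<epsilon>)) \<le> K * A ^ e * q ^ nat \<bar>k\<bar>)"
proof -
  obtain C A where "0 \<le> C" "0 < A"
    and CA: "\<And>e k \<epsilon>. \<epsilon> \<in> {-1, 1} \<Longrightarrow> norm (Dg e (pt k \<epsilon>)) * weight (m + 2) k \<le> C * A ^ e"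
    using weighted_qderivs_bounded[of "m + 2"] by blast
  have decay: "norm (Dg e (pt k \<epsilon>)) * (q powi k) ^ Suc m \<le> C * A ^ e * q ^ nat \<bar>k\<bar>"
    if \<epsilon>: "\<epsilon> \<in> {-1, 1}" for e k \<epsilon>
  proof (cases "k < 0")
    case False
    define y where "y = q powi k"
    have "0 < y" "y \<le> 1" using q_powi_pos q_powi_le_1 False by (auto simp: y_def)
    have "norm (Dg e (pt k \<epsilon>)) \<le> C * A ^ e" using CA[OF \<epsilon>, of e k] False by (simp add: weight_def)
    moreover have "y ^ Suc m \<le> y" using \<open>0 < y\<close> \<open>y \<le> 1\<close> by (simp add: mult_left_le_one_le power_le_one)
    ultimately have "norm (Dg e (pt k \<epsilon>)) * y ^ Suc m \<le> C * A ^ e * y"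
      using \<open>0 < y\<close> \<open>0 \<le> C\<close> \<open>0 < A\<close> by (intro mult_mono) auto
    then show ?thesis using False by (simp add: y_def power_int_nonneg_eq_power_abs)
  next
    case True
    define y where "y = q powi k"
    have "0 < y" using q_powi_pos by (simp add: y_def)
    have "norm (Dg e (pt k \<epsilon>)) * y ^ Suc m = norm (Dg e (pt k \<epsilon>)) * y ^ (m + 2) * inverse y"
      using \<open>0 < y\<close> by (simp add: field_simps)
    also have "\<dots> \<le> C * A ^ e * inverse y"
      using CA[OF \<epsilon>, of e k] True \<open>0 < y\<close> by (intro mult_right_mono) (auto simp: weight_def y_def)
    finally show ?thesis
      using inverse_power_int_neg_eq_power_abs[where x = q, OF True] by (simp add: y_def)
  qed
  have "norm (qint_summand q c (\<lambda>x. Dg e x * x ^ m) (k, \<epsilon>)) \<le> (c ^ Suc m * C) * A ^ e * q ^ nat \<bar>k\<bar>"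
    if \<epsilon>: "\<epsilon> \<in> {-1, 1}" for e k \<epsilon>
  proof -
    have "norm (qint_summand q c (\<lambda>x. Dg e x * x ^ m) (k, \<epsilon>))
        = c ^ Suc m * (norm (Dg e (pt k \<epsilon>)) * (q powi k) ^ Suc m)"
      by (rule norm_qint_summand_pt[OF \<epsilon>])
    also have "\<dots> \<le> c ^ Suc m * (C * A ^ e * q ^ nat \<bar>k\<bar>)"
      using c_pos by (intro mult_left_mono decay[OF \<epsilon>]) auto
    finally show ?thesis by (simp add: mult_ac)
  qed
  moreover have "0 \<le> c ^ Suc m * C" using \<open>0 \<le> C\<close> c_pos by simp
  ultimately show ?thesis using \<open>0 < A\<close> by blast
qed

lemma qint_summand_qderivs_summable: "qint_summand q c (\<lambda>x. Dg e x * x ^ m) summable_on Idx"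
proof -
  obtain K A where "\<And>k \<epsilon>. \<epsilon> \<in> {-1, 1} \<Longrightarrow>
      norm (qint_summand q c (\<lambda>x. Dg e x * x ^ m) (k, \<epsilon>)) \<le> K * A ^ e * q ^ nat \<bar>k\<bar>"
    using norm_qint_summand_qderivs_le[of m] by blast
  then show ?thesis by (rule lattice_summable_if_bounded)
qed

lemma qderivs_outside_decay:
  "\<exists>C A. 0 \<le> C \<and> 0 < A \<and>
     (\<forall>e k \<epsilon>. k < 0 \<longrightarrow> \<epsilon> \<in> {-1, 1} \<longrightarrow> norm (Dg e (pt k \<epsilon>)) \<le> C * A ^ e * q ^ nat \<bar>k\<bar>)"
proof -
  obtain C A where "0 \<le> C" "0 < A"
    and CA: "\<And>e k \<epsilon>. \<epsilon> \<in> {-1, 1} \<Longrightarrow> norm (Dg e (pt k \<epsilon>)) * weight 1 k \<le> C * A ^ e"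
    using weighted_qderivs_bounded[of 1] by blast
  have "norm (Dg e (pt k \<epsilon>)) \<le> C * A ^ e * q ^ nat \<bar>k\<bar>" if "k < 0" "\<epsilon> \<in> {-1, 1}" for e k \<epsilon>
  proof -
    have "norm (Dg e (pt k \<epsilon>)) * q powi k \<le> C * A ^ e"
      using CA[OF that(2), of e k] that(1) by (simp add: weight_def)
    then have "norm (Dg e (pt k \<epsilon>)) \<le> C * A ^ e / q powi k"
      using q_powi_pos[of k] by (simp add: pos_le_divide_eq)
    then show ?thesis
      using inverse_power_int_neg_eq_power_abs[where x = q, OF that(1)] by (simp add: divide_inverse)
  qed
  then show ?thesis using \<open>0 \<le> C\<close> \<open>0 < A\<close> by blast
qed

lemma qderivs_odd_part_summable: "(\<lambda>k. Dg j (pt k 1) - Dg j (pt k (-1))) summable_on UNIV"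
proof -
  obtain C A where "0 \<le> C" "0 < A" and decay: "\<And>e k \<epsilon>. k < 0 \<Longrightarrow> \<epsilon> \<in> {-1, 1} \<Longrightarrow>
      norm (Dg e (pt k \<epsilon>)) \<le> C * A ^ e * q ^ nat \<bar>k\<bar>"
    using qderivs_outside_decay by blast
  define K where "K = 2 * qdiff_factor ^ j * taylor_majorant + 2 * C * A ^ j"
  have bound: "norm (Dg j (pt k 1) - Dg j (pt k (-1))) \<le> K * q ^ nat \<bar>k\<bar>" for k
  proof (cases "k < 0")
    case False
    have "norm (Dg j (pt k 1) - Dg j (pt k (-1))) = norm (qderiv_series j (pt k 1) - qderiv_series j (- pt k 1))"
      using qderivs_eq_qderiv_series[of k 1 j] qderivs_eq_qderiv_series[of k "-1" j] False pt_minus by simp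
    also have "\<dots> \<le> 2 * (norm (pt k 1) / c) * (qdiff_factor ^ j * taylor_majorant)"
      by (rule norm_qderiv_series_odd_part_le[OF norm_pt_le]) (use False in auto)
    also have "\<dots> = (2 * qdiff_factor ^ j * taylor_majorant) * q ^ nat \<bar>k\<bar>"
      using norm_pt[of 1 k] c_pos False by (simp add: power_int_nonneg_eq_power_abs)
    also have "\<dots> \<le> K * q ^ nat \<bar>k\<bar>"
      using \<open>0 \<le> C\<close> \<open>0 < A\<close> q_pos by (intro mult_right_mono) (auto simp: K_def)
    finally show ?thesis .
  next
    case True
    have "norm (Dg j (pt k 1) - Dg j (pt k (-1))) \<le> norm (Dg j (pt k 1)) + norm (Dg j (pt k (-1)))"
      by (rule norm_triangle_ineq4)
    also have "\<dots> \<le> C * A ^ j * q ^ nat \<bar>k\<bar> + C * A ^ j * q ^ nat \<bar>k\<bar>"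
      by (intro add_mono decay True) auto
    also have "\<dots> \<le> K * q ^ nat \<bar>k\<bar>"
      using taylor_majorant_nonneg qdiff_factor_pos q_pos by (simp add: K_def algebra_simps)
    finally show ?thesis .
  qed
  have "(\<lambda>k. K * q ^ nat \<bar>k\<bar>) summable_on UNIV"
    using summable_on_int_power_abs q_pos q_less_1 by (intro summable_on_cmult_right) auto
  then have "(\<lambda>k. norm (Dg j (pt k 1) - Dg j (pt k (-1)))) summable_on UNIV"
    by (rule Infinite_Sum.abs_summable_on_comparison_test') (use bound in auto)
  then show ?thesis by (rule abs_summable_summable)
qed

section \<open>Moments of the q-derivatives\<close>

(* dmoment e m is the lattice integral of (d^e g)(x) x^m, without the factor 1 - q. *)
definition dmoment :: "nat \<Rightarrow> nat \<Rightarrow> complex" where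
  "dmoment e m = infsum (qint_summand q c (\<lambda>x. Dg e x * x ^ m)) Idx"

lemma qmoment_eq_0_iff_dmoment: "qmoment q c g m = 0 \<longleftrightarrow> dmoment 0 m = 0"
  using q_pos q_less_1 by (simp add: qmoment_def qint_def dmoment_def qderivs_0)

lemma dmoment_Suc_Suc:
  "dmoment (Suc e) (Suc m) = - of_real (qbracket q (Suc m) / q ^ Suc m) * dmoment e m"
  unfolding dmoment_def
  by (rule lattice_sum_qdiff_times_power[OF qderivs_Suc_pt qint_summand_qderivs_summable])

lemma dmoment_Suc_0: "dmoment (Suc e) 0 = 0"
proof -
  have "qint_summand q c (Dg (Suc e)) summable_on Idx"
    using qint_summand_qderivs_summable[of "Suc e" 0] by simp
  from lattice_sum_qdiff_eq_0[where H' = "Dg (Suc e)" and H = "Dg e", OF qderivs_Suc_pt this qderivs_odd_part_summable]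
  have "infsum (qint_summand q c (Dg (Suc e))) Idx = 0" .
  then show ?thesis by (simp add: dmoment_def)
qed

lemma dmoment_add_eq_0_iff: "dmoment (e + i) (m + i) = 0 \<longleftrightarrow> dmoment e m = 0"
proof (induction i)
  case (Suc i)
  have "qbracket q (Suc (m + i)) \<noteq> 0" using qbracket_pos[OF q_pos q_less_1, of "Suc (m + i)"] by simp
  then show ?case using Suc.IH q_pos by (simp add: dmoment_Suc_Suc)
qed simp

lemma dmoment_eq_0_if_less: "m < e \<Longrightarrow> dmoment e m = 0"
  using dmoment_add_eq_0_iff[of "Suc (e - m - 1)" m 0] dmoment_Suc_0[of "e - m - 1"] by simp

lemma qconv_at_pt_summable:
  assumes "I_E q \<gamma> f" "\<epsilon> \<in> {-1, 1}"
  shows "summable (\<lambda>e. norm (qconv_coeff q \<gamma> f e * Dg e (pt k \<epsilon>)))"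
proof -
  obtain C A where "0 \<le> C" "0 < A"
    and bounded: "\<And>e k \<epsilon>. \<epsilon> \<in> {-1, 1} \<Longrightarrow> norm (Dg e (pt k \<epsilon>)) \<le> C * A ^ e"
    using qderivs_bounded by blast
  note CA = bounded[OF assms(2), of _ k]
  have bound: "norm (qconv_coeff q \<gamma> f e * Dg e (pt k \<epsilon>)) \<le> C * (norm (qconv_coeff q \<gamma> f e) * A ^ e)" for e
    using mult_left_mono[OF CA[of e] norm_ge_zero[of "qconv_coeff q \<gamma> f e"]]
    by (simp add: norm_mult mult_ac)
  have majorant: "summable (\<lambda>e. C * (norm (qconv_coeff q \<gamma> f e) * A ^ e))"
    using \<open>0 < A\<close> by (intro summable_mult I_E_qconv_coeff_summable[OF assms(1)]) simp
  show ?thesis by (rule summable_comparison_test'[OF majorant]) (use bound in simp)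
qed

lemma qconv_at_pt_has_sum_0:
  assumes "I_E q \<gamma> f" "qconv_zero q \<gamma> f (qlat q c) g" "\<epsilon> \<in> {-1, 1}"
  shows "((\<lambda>e. qconv_coeff q \<gamma> f e * Dg e (pt k \<epsilon>)) has_sum 0) UNIV"
proof -
  note summable = qconv_at_pt_summable[OF assms(1,3), of k]
  have "qconv_defined q \<gamma> f (qlat q c) g (pt k \<epsilon>)"
    unfolding qconv_defined_def qderivs_defined_def qconv_term_eq
    using summable pt_neq_0[OF assms(3)] pt_in_qlat[OF assms(3)] of_real_power_mult_pt by simp
  then have "(\<Sum>e. qconv_coeff q \<gamma> f e * Dg e (pt k \<epsilon>)) = 0"
    using assms(2) by (simp add: qconv_zero_def qconv_def qconv_term_eq)
  moreover have "((\<lambda>e. qconv_coeff q \<gamma> f e * Dg e (pt k \<epsilon>)) has_sum (\<Sum>e. qconv_coeff q \<gamma> f e * Dg e (pt k \<epsilon>))) UNIV"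
    by (rule norm_summable_imp_has_sum[OF summable summable_sums[OF summable_norm_cancel[OF summable]]])
  ultimately show ?thesis by simp
qed

(* Integrating f *_gamma g = 0 against x^n over the lattice, with the two sums exchanged. *)
lemma infsum_qconv_coeff_dmoment_eq_0:
  assumes "I_E q \<gamma> f" "qconv_zero q \<gamma> f (qlat q c) g"
  shows "infsum (\<lambda>e. qconv_coeff q \<gamma> f e * dmoment e n) UNIV = 0"
proof -
  obtain K A where "0 \<le> K" "0 < A" and KA: "\<And>e k \<epsilon>. \<epsilon> \<in> {-1, 1} \<Longrightarrow>
      norm (qint_summand q c (\<lambda>x. Dg e x * x ^ n) (k, \<epsilon>)) \<le> K * A ^ e * q ^ nat \<bar>k\<bar>"
    using norm_qint_summand_qderivs_le[of n] by blast
  define u where "u = (\<lambda>x e. qconv_coeff q \<gamma> f e * qint_summand q c (\<lambda>x. Dg e x * x ^ n) x)"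
  have swap: "infsum (\<lambda>x. infsum (u x) UNIV) Idx = infsum (\<lambda>e. infsum (\<lambda>x. u x e) Idx) UNIV"
  proof (rule lattice_infsum_swap[where \<alpha> = "\<lambda>e. norm (qconv_coeff q \<gamma> f e) * A ^ e" and K = K])
    show "(\<lambda>e. norm (qconv_coeff q \<gamma> f e) * A ^ e) summable_on UNIV"
      using I_E_qconv_coeff_summable[OF assms(1), of A] \<open>0 < A\<close>
      by (subst summable_on_UNIV_nonneg_real_iff) auto
    fix k \<epsilon> e assume \<epsilon>: "\<epsilon> \<in> {-1, 1::real}"
    have "norm (qconv_coeff q \<gamma> f e) * norm (qint_summand q c (\<lambda>x. Dg e x * x ^ n) (k, \<epsilon>))
        \<le> norm (qconv_coeff q \<gamma> f e) * (K * A ^ e * q ^ nat \<bar>k\<bar>)"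
      by (rule mult_left_mono[OF KA[OF \<epsilon>]]) simp
    then show "norm (u (k, \<epsilon>) e) \<le> norm (qconv_coeff q \<gamma> f e) * A ^ e * (K * q ^ nat \<bar>k\<bar>)"
      by (simp add: u_def norm_mult mult_ac)
  qed (use \<open>0 \<le> K\<close> \<open>0 < A\<close> in auto)
  have inner: "infsum (u x) UNIV = 0" if "x \<in> Idx" for x
  proof -
    from that obtain k \<epsilon> where x: "x = (k, \<epsilon>)" and \<epsilon>: "\<epsilon> \<in> {-1, 1}" by auto
    define w where "w = complex_of_real (q powi k * c) * pt k \<epsilon> ^ n"
    have ux: "u x = (\<lambda>e. w * (qconv_coeff q \<gamma> f e * Dg e (pt k \<epsilon>)))"
      by (simp add: u_def x qint_summand_qlat_point w_def mult_ac)
    have "((\<lambda>e. w * (qconv_coeff q \<gamma> f e * Dg e (pt k \<epsilon>))) has_sum 0) UNIV"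
      using has_sum_cmult_right[OF qconv_at_pt_has_sum_0[OF assms \<epsilon>], of w] by simp
    then show ?thesis unfolding ux by (rule infsumI)
  qed
  have outer: "infsum (\<lambda>x. u x e) Idx = qconv_coeff q \<gamma> f e * dmoment e n" for e
    unfolding u_def dmoment_def by (rule infsum_cmult_right[OF qint_summand_qderivs_summable])
  have "infsum (\<lambda>x. infsum (u x) UNIV) Idx = 0" using inner by (rule infsum_0)
  then show ?thesis unfolding swap outer .
qed

lemma qconv_coeff_dmoment_eq_0:
  assumes "\<And>e. e < a \<Longrightarrow> qmoment q \<gamma> f e = 0" and "\<And>e. e < b \<Longrightarrow> qmoment q c g e = 0"
    and "e \<noteq> a"
  shows "qconv_coeff q \<gamma> f e * dmoment e (a + b) = 0"
proof -
  consider "e < a" | "a + b < e" | "a < e" "e \<le> a + b" using \<open>e \<noteq> a\<close> by linarith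
  then show ?thesis
  proof cases
    case 1
    then show ?thesis using assms(1) q_pos q_less_1 by (simp add: qconv_coeff_eq_0_iff)
  next
    case 2
    then show ?thesis by (simp add: dmoment_eq_0_if_less)
  next
    case 3
    have "dmoment 0 (a + b - e) = 0"
      using assms(2)[of "a + b - e"] 3 by (simp add: qmoment_eq_0_iff_dmoment)
    then have "dmoment (0 + e) (a + b - e + e) = 0" by (simp only: dmoment_add_eq_0_iff)
    then show ?thesis using 3 by simp
  qed
qed

(* Choosing n = a + b for the first nonvanishing moments a of f and b of g isolates the term e = a. *)
lemma moments_eq_0_if_qconv_zero:
  assumes "I_E q \<gamma> f" "qconv_zero q \<gamma> f (qlat q c) g"
  shows "(\<forall>e. qmoment q \<gamma> f e = 0) \<or> (\<forall>e. qmoment q c g e = 0)"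
proof (rule ccontr)
  assume "\<not> ?thesis"
  then have "\<exists>e. qmoment q \<gamma> f e \<noteq> 0" "\<exists>e. qmoment q c g e \<noteq> 0" by auto
  then obtain a b where
    a: "qmoment q \<gamma> f a \<noteq> 0" "\<And>e. e < a \<Longrightarrow> qmoment q \<gamma> f e = 0" and
    b: "qmoment q c g b \<noteq> 0" "\<And>e. e < b \<Longrightarrow> qmoment q c g e = 0"
    unfolding exists_least_iff[of "\<lambda>e. qmoment q \<gamma> f e \<noteq> 0"] exists_least_iff[of "\<lambda>e. qmoment q c g e \<noteq> 0"]
    by blast
  have "infsum (\<lambda>e. qconv_coeff q \<gamma> f e * dmoment e (a + b)) UNIV
      = infsum (\<lambda>e. qconv_coeff q \<gamma> f e * dmoment e (a + b)) {a}"
    using qconv_coeff_dmoment_eq_0[OF a(2) b(2)] by (intro infsum_cong_neutral) auto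
  then have "qconv_coeff q \<gamma> f a * dmoment a (a + b) = 0"
    using infsum_qconv_coeff_dmoment_eq_0[OF assms, of "a + b"] by simp
  moreover have "qconv_coeff q \<gamma> f a \<noteq> 0" using a(1) q_pos q_less_1 by (simp add: qconv_coeff_eq_0_iff)
  moreover have "dmoment (0 + a) (b + a) \<noteq> 0"
    using b(1) by (simp only: dmoment_add_eq_0_iff qmoment_eq_0_iff_dmoment not_False_eq_True)
  then have "dmoment a (a + b) \<noteq> 0" by (simp add: add.commute[of b a])
  ultimately show False by simp
qed

end

theorem corollary3p8:
  fixes q \<gamma> \<gamma>' :: real and f g :: "complex \<Rightarrow> complex"
  assumes "0 < q" "q < 1" "\<gamma> > 0" "\<gamma>' > 0"
    and "HD_I_E q \<gamma> f" and "HD_I_E q \<gamma>' g"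
    and "qconv_zero q \<gamma> f (qlat q \<gamma>') g"
  shows "((\<forall>D h. qconv_zero q \<gamma> f D h) \<or> (\<forall>D h. qconv_zero q \<gamma>' g D h))
         \<and> (qconv_zero q \<gamma> f (qlat q \<gamma>) f \<or> qconv_zero q \<gamma>' g (qlat q \<gamma>') g)"
proof -
  obtain r F where "\<gamma>' < r" "F holomorphic_on ball 0 r" "\<forall>x \<in> qlat q \<gamma>' \<inter> ball 0 r. F x = g x"
    using assms(6) unfolding HD_I_E_def by blast
  moreover have "I_inf q \<gamma>' g" using assms(6) unfolding HD_I_E_def I_E_def by blast
  ultimately interpret qlattice_holomorphic q \<gamma>' g F r
    using assms(1-4) by unfold_locales auto
  have "I_E q \<gamma> f" using assms(5) unfolding HD_I_E_def by blast
  then have "(\<forall>e. qmoment q \<gamma> f e = 0) \<or> (\<forall>e. qmoment q \<gamma>' g e = 0)"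
    using moments_eq_0_if_qconv_zero assms(7) by blast
  then show ?thesis using qconv_zero_if_moments_eq_0 by blast
qed

end
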